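(* For a fuzzy Riesz space $(E,\mu)$ the following are equivalent: (1) $E$ has the fuzzy $\sigma$-order continuity property; (2) every fuzzy lattice homomorphism from $E$ into a fuzzy Archimedean Riesz space is fuzzy $\sigma$-order continuous; (3) every uniformly fuzzy closed fuzzy ideal of $E$ is a fuzzy $\sigma$-ideal.
   Context: A fuzzy order on a real vector space $E$ is a map $\mu:E\times E\to[0,1]$ with $\mu(x,x)=1$; $\mu(x,y)+\mu(y,x)>1$ implies $x=y$; and $\mu(x,z)\ge\sup_{y}\min(\mu(x,y),\mu(y,z))$. Write $x\le y$ for $\mu(x,y)>\frac12$; upper bounds, suprema and infima are taken with respect to this relation. $(E,\mu)$ is a fuzzy ordered linear space if $\mu(x_1,x_2)>\frac12$ implies $\mu(x_1,x_2)\le\mu(x_1+x,x_2+x)$ for all $x$ and $\mu(x_1,x_2)\le\mu(\alpha x_1,\alpha x_2)$ for all $\alpha>0$; it is a fuzzy Riesz space if $x\vee y=\sup\{x,y\}$, $x\wedge y=\inf\{x,y\}$ exist for all $x,y$. $E^+=\{x:0\le x\}$, $|x|=x\vee(-x)$. A fuzzy Riesz space is fuzzy Archimedean if for every nonzero $x\in E^+$ the set $\{\lambda x:\lambda>0\}$ is not bounded above. A fuzzy lattice homomorphism is a linear map $T$ with $T(x\vee y)=Tx\vee Ty$; a linear map is fuzzy positive if $0\le x$ implies $0\le Tx$. A sequence $x_n$ fuzzy order converges to $x$ if there is a sequence $y_n$ decreasing with infimum $0$ and $\mu(|x_n-x|,y_n)>\frac12$ for all $n$; $T$ is fuzzy $\sigma$-order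 continuous if $x_n\to0$ in fuzzy order implies $Tx_n\to0$ in fuzzy order. $E$ has the fuzzy $\sigma$-order continuity property if every fuzzy positive operator from $E$ into any fuzzy Archimedean fuzzy Riesz space is fuzzy $\sigma$-order continuous. A fuzzy ideal is a vector subspace $A$ such that $\mu(|x|,|y|)>\frac12$ and $y\in A$ imply $x\in A$; it is a fuzzy $\sigma$-ideal if $x_n\in A\cap E^+$, $x_n\uparrow x$ (increasing with supremum $x$) imply $x\in A$. A sequence converges relatively uniformly in fuzzy order to $x$ if there is $w\in E^+$ such that for each $\varepsilon>0$ there is $n(\varepsilon)$ with $\mu(|x-x_n|,\varepsilon w)>\frac12$ for $n>n(\varepsilon)$; a set is uniformly fuzzy closed if it contains all such limits of its sequences. *)

theory Defs
  imports Main "HOL.Real_Vector_Spaces"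
begin

text \<open>A fuzzy ordered space is given by a carrier set V (a subspace of a real vector
space type) and a fuzzy relation mu. The space E of the theorem has carrier UNIV.\<close>

definition fuzzy_order :: "'b set \<Rightarrow> ('b \<Rightarrow> 'b \<Rightarrow> real) \<Rightarrow> bool" where
  "fuzzy_order V \<mu> \<longleftrightarrow>
     (\<forall>x\<in>V. \<forall>y\<in>V. 0 \<le> \<mu> x y \<and> \<mu> x y \<le> 1) \<and>
     (\<forall>x\<in>V. \<mu> x x = 1) \<and>
     (\<forall>x\<in>V. \<forall>y\<in>V. \<mu> x y + \<mu> y x > 1 \<longrightarrow> x = y) \<and>
     (\<forall>x\<in>V. \<forall>z\<in>V. (SUP y\<in>V. min (\<mu> x y) (\<mu> y z)) \<le> \<mu> x z)"

definition fle :: "('b \<Rightarrow> 'b \<Rightarrow> real) \<Rightarrow> 'b \<Rightarrow> 'b \<Rightarrow> bool" where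
  "fle \<mu> x y \<longleftrightarrow> \<mu> x y > 1/2"

definition is_ub :: "'b set \<Rightarrow> ('b \<Rightarrow> 'b \<Rightarrow> real) \<Rightarrow> 'b set \<Rightarrow> 'b \<Rightarrow> bool" where
  "is_ub V \<mu> S u \<longleftrightarrow> u \<in> V \<and> (\<forall>s\<in>S. fle \<mu> s u)"

definition is_lb :: "'b set \<Rightarrow> ('b \<Rightarrow> 'b \<Rightarrow> real) \<Rightarrow> 'b set \<Rightarrow> 'b \<Rightarrow> bool" where
  "is_lb V \<mu> S u \<longleftrightarrow> u \<in> V \<and> (\<forall>s\<in>S. fle \<mu> u s)"

definition is_sup :: "'b set \<Rightarrow> ('b \<Rightarrow> 'b \<Rightarrow> real) \<Rightarrow> 'b set \<Rightarrow> 'b \<Rightarrow> bool" where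
  "is_sup V \<mu> S s \<longleftrightarrow> is_ub V \<mu> S s \<and> (\<forall>u. is_ub V \<mu> S u \<longrightarrow> fle \<mu> s u)"

definition is_inf :: "'b set \<Rightarrow> ('b \<Rightarrow> 'b \<Rightarrow> real) \<Rightarrow> 'b set \<Rightarrow> 'b \<Rightarrow> bool" where
  "is_inf V \<mu> S i \<longleftrightarrow> is_lb V \<mu> S i \<and> (\<forall>u. is_lb V \<mu> S u \<longrightarrow> fle \<mu> u i)"

definition fuzzy_ordered_linear_space ::
  "'b::real_vector set \<Rightarrow> ('b \<Rightarrow> 'b \<Rightarrow> real) \<Rightarrow> bool" where
  "fuzzy_ordered_linear_space V \<mu> \<longleftrightarrow>
     subspace V \<and> fuzzy_order V \<mu> \<and>
     (\<forall>x1\<in>V. \<forall>x2\<in>V. \<mu> x1 x2 > 1/2 \<longrightarrow>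
        (\<forall>x\<in>V. \<mu> x1 x2 \<le> \<mu> (x1 + x) (x2 + x)) \<and>
        (\<forall>\<alpha>::real. \<alpha> > 0 \<longrightarrow> \<mu> x1 x2 \<le> \<mu> (\<alpha> *\<^sub>R x1) (\<alpha> *\<^sub>R x2)))"

definition fuzzy_riesz :: "'b::real_vector set \<Rightarrow> ('b \<Rightarrow> 'b \<Rightarrow> real) \<Rightarrow> bool" where
  "fuzzy_riesz V \<mu> \<longleftrightarrow> fuzzy_ordered_linear_space V \<mu> \<and>
     (\<forall>x\<in>V. \<forall>y\<in>V. (\<exists>s. is_sup V \<mu> {x, y} s) \<and> (\<exists>i. is_inf V \<mu> {x, y} i))"

definition fsup :: "'b set \<Rightarrow> ('b \<Rightarrow> 'b \<Rightarrow> real) \<Rightarrow> 'b \<Rightarrow> 'b \<Rightarrow> 'b" where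
  "fsup V \<mu> x y = (THE s. is_sup V \<mu> {x, y} s)"

definition fabs :: "'b::real_vector set \<Rightarrow> ('b \<Rightarrow> 'b \<Rightarrow> real) \<Rightarrow> 'b \<Rightarrow> 'b" where
  "fabs V \<mu> x = fsup V \<mu> x (- x)"

definition fpos :: "'b::real_vector set \<Rightarrow> ('b \<Rightarrow> 'b \<Rightarrow> real) \<Rightarrow> 'b set" where
  "fpos V \<mu> = {x \<in> V. fle \<mu> 0 x}"

definition fuzzy_archimedean :: "'b::real_vector set \<Rightarrow> ('b \<Rightarrow> 'b \<Rightarrow> real) \<Rightarrow> bool" where
  "fuzzy_archimedean V \<mu> \<longleftrightarrow> fuzzy_riesz V \<mu> \<and>
     (\<forall>x \<in> fpos V \<mu>. x \<noteq> 0 \<longrightarrow> \<not> (\<exists>u. is_ub V \<mu> {l *\<^sub>R x | l::real. l > 0} u))"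

definition forder_conv ::
  "'b::real_vector set \<Rightarrow> ('b \<Rightarrow> 'b \<Rightarrow> real) \<Rightarrow> (nat \<Rightarrow> 'b) \<Rightarrow> 'b \<Rightarrow> bool" where
  "forder_conv V \<mu> xs x \<longleftrightarrow>
     (\<exists>ys. (\<forall>n. ys n \<in> V) \<and> (\<forall>n. fle \<mu> (ys (Suc n)) (ys n)) \<and>
          is_inf V \<mu> (range ys) 0 \<and>
          (\<forall>n. fle \<mu> (fabs V \<mu> (xs n - x)) (ys n)))"

definition fsigma_order_continuous ::
  "('a::real_vector \<Rightarrow> 'a \<Rightarrow> real) \<Rightarrow> 'b::real_vector set \<Rightarrow> ('b \<Rightarrow> 'b \<Rightarrow> real)
    \<Rightarrow> ('a \<Rightarrow> 'b) \<Rightarrow> bool" where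
  "fsigma_order_continuous \<mu> V \<nu> T \<longleftrightarrow>
     (\<forall>xs. forder_conv UNIV \<mu> xs 0 \<longrightarrow> forder_conv V \<nu> (T \<circ> xs) 0)"

definition fuzzy_positive ::
  "('a::real_vector \<Rightarrow> 'a \<Rightarrow> real) \<Rightarrow> 'b::real_vector set \<Rightarrow> ('b \<Rightarrow> 'b \<Rightarrow> real)
    \<Rightarrow> ('a \<Rightarrow> 'b) \<Rightarrow> bool" where
  "fuzzy_positive \<mu> V \<nu> T \<longleftrightarrow> linear T \<and> T ` UNIV \<subseteq> V \<and>
     (\<forall>x. fle \<mu> 0 x \<longrightarrow> fle \<nu> 0 (T x))"

definition fuzzy_lattice_hom ::
  "('a::real_vector \<Rightarrow> 'a \<Rightarrow> real) \<Rightarrow> 'b::real_vector set \<Rightarrow> ('b \<Rightarrow> 'b \<Rightarrow> real)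
    \<Rightarrow> ('a \<Rightarrow> 'b) \<Rightarrow> bool" where
  "fuzzy_lattice_hom \<mu> V \<nu> T \<longleftrightarrow> linear T \<and> T ` UNIV \<subseteq> V \<and>
     (\<forall>x y. T (fsup UNIV \<mu> x y) = fsup V \<nu> (T x) (T y))"

text \<open>Properties (1) and (2), for target spaces whose carrier lives in the type 'b.\<close>
definition fsigma_oc_property :: "('a::real_vector \<Rightarrow> 'a \<Rightarrow> real) \<Rightarrow> 'b::real_vector itself \<Rightarrow> bool" where
  "fsigma_oc_property \<mu> _ \<longleftrightarrow>
     (\<forall>(V::'b set) \<nu> T. fuzzy_archimedean V \<nu> \<and> fuzzy_positive \<mu> V \<nu> T
        \<longrightarrow> fsigma_order_continuous \<mu> V \<nu> T)"

definition fhom_sigma_oc_property :: "('a::real_vector \<Rightarrow> 'a \<Rightarrow> real) \<Rightarrow> 'b::real_vector itself \<Rightarrow> bool" where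
  "fhom_sigma_oc_property \<mu> _ \<longleftrightarrow>
     (\<forall>(V::'b set) \<nu> T. fuzzy_archimedean V \<nu> \<and> fuzzy_lattice_hom \<mu> V \<nu> T
        \<longrightarrow> fsigma_order_continuous \<mu> V \<nu> T)"

definition fuzzy_ideal :: "('a::real_vector \<Rightarrow> 'a \<Rightarrow> real) \<Rightarrow> 'a set \<Rightarrow> bool" where
  "fuzzy_ideal \<mu> A \<longleftrightarrow> subspace A \<and>
     (\<forall>x y. fle \<mu> (fabs UNIV \<mu> x) (fabs UNIV \<mu> y) \<and> y \<in> A \<longrightarrow> x \<in> A)"

definition fuzzy_sigma_ideal :: "('a::real_vector \<Rightarrow> 'a \<Rightarrow> real) \<Rightarrow> 'a set \<Rightarrow> bool" where
  "fuzzy_sigma_ideal \<mu> A \<longleftrightarrow> fuzzy_ideal \<mu> A \<and>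
     (\<forall>xs x. (\<forall>n. xs n \<in> A \<inter> fpos UNIV \<mu>) \<and> (\<forall>n. fle \<mu> (xs n) (xs (Suc n))) \<and>
             is_sup UNIV \<mu> (range xs) x \<longrightarrow> x \<in> A)"

definition ru_conv :: "('a::real_vector \<Rightarrow> 'a \<Rightarrow> real) \<Rightarrow> (nat \<Rightarrow> 'a) \<Rightarrow> 'a \<Rightarrow> bool" where
  "ru_conv \<mu> xs x \<longleftrightarrow>
     (\<exists>w \<in> fpos UNIV \<mu>. \<forall>\<epsilon>::real. \<epsilon> > 0 \<longrightarrow>
        (\<exists>N. \<forall>n>N. fle \<mu> (fabs UNIV \<mu> (x - xs n)) (\<epsilon> *\<^sub>R w)))"

definition uniformly_fuzzy_closed :: "('a::real_vector \<Rightarrow> 'a \<Rightarrow> real) \<Rightarrow> 'a set \<Rightarrow> bool" where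
  "uniformly_fuzzy_closed \<mu> A \<longleftrightarrow> (\<forall>xs x. (\<forall>n. xs n \<in> A) \<and> ru_conv \<mu> xs x \<longrightarrow> x \<in> A)"

end

theory Submission
  imports Defs "HOL-Library.Lattice_Algebras"
begin

(*
  (1) \<Rightarrow> (2) holds because lattice homomorphisms are positive.

  (3) \<Rightarrow> (1): let T be positive, y\<^sub>n \<down> 0 and z a lower bound of the T y\<^sub>n. For c \<ge> 1 put
  g\<^sub>n = (c y\<^sub>n - y\<^sub>0)\<^sup>+. The x for which T(|x| \<and> g\<^sub>n) decreases to 0 form a uniformly closed
  ideal (closedness uses that the target is Archimedean), hence a \<sigma>-ideal by (3). It contains
  the elements (y\<^sub>0 - c y\<^sub>m)\<^sup>+, which are disjoint from g\<^sub>m and increase to y\<^sub>0; so it contains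
  c y\<^sub>0, and then c z - T y\<^sub>0 \<le> T g\<^sub>n forces c z \<le> T y\<^sub>0. Since c \<ge> 1 is arbitrary,
  the Archimedean property gives z \<le> 0.

  (2) \<Rightarrow> (3): for a uniformly closed ideal A, the quotient E/A with its crisp order is an
  Archimedean Riesz space (again by closedness) and the quotient map is a lattice homomorphism.
  If A \<ni> x\<^sub>n \<up> x, then x - x\<^sub>n \<down> 0 is mapped to the constant class of x, which must therefore
  vanish, i.e. x \<in> A.
*)

locale fuzzy_riesz_space =
  fixes V :: "'b::real_vector set" and \<nu> :: "'b \<Rightarrow> 'b \<Rightarrow> real"
  assumes riesz: "fuzzy_riesz V \<nu>"
begin

lemma subspace_carrier: "subspace V"
  using riesz by (simp add: fuzzy_riesz_def fuzzy_ordered_linear_space_def)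

lemma fuzzy_order_carrier: "fuzzy_order V \<nu>"
  using riesz by (simp add: fuzzy_riesz_def fuzzy_ordered_linear_space_def)

lemma carrier_closed [simp]:
  "0 \<in> V"
  "x \<in> V \<Longrightarrow> y \<in> V \<Longrightarrow> x + y \<in> V"
  "x \<in> V \<Longrightarrow> - x \<in> V"
  "x \<in> V \<Longrightarrow> y \<in> V \<Longrightarrow> x - y \<in> V"
  "x \<in> V \<Longrightarrow> c *\<^sub>R x \<in> V"
  using subspace_carrier
  by (simp_all add: subspace_0 subspace_add subspace_neg subspace_diff subspace_scale)

lemma fle_refl: "x \<in> V \<Longrightarrow> fle \<nu> x x"
  using fuzzy_order_carrier by (simp add: fuzzy_order_def fle_def)

lemma fle_antisym: "fle \<nu> x y \<Longrightarrow> fle \<nu> y x \<Longrightarrow> x \<in> V \<Longrightarrow> y \<in> V \<Longrightarrow> x = y"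
  using fuzzy_order_carrier unfolding fuzzy_order_def fle_def by force

lemma fle_trans:
  assumes "fle \<nu> x y" "fle \<nu> y z" and x: "x \<in> V" and y: "y \<in> V" and z: "z \<in> V"
  shows "fle \<nu> x z"
proof -
  have bounded: "\<forall>x\<in>V. \<forall>y\<in>V. 0 \<le> \<nu> x y \<and> \<nu> x y \<le> 1"
    and sup_min: "(SUP u\<in>V. min (\<nu> x u) (\<nu> u z)) \<le> \<nu> x z"
    using fuzzy_order_carrier x z unfolding fuzzy_order_def by auto
  have "bdd_above ((\<lambda>u. min (\<nu> x u) (\<nu> u z)) ` V)"
    using bounded x z by (intro bdd_aboveI[where M=1]) (auto simp: min_le_iff_disj)
  then have "min (\<nu> x y) (\<nu> y z) \<le> (SUP u\<in>V. min (\<nu> x u) (\<nu> u z))"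
    using y by (rule cSUP_upper2) simp
  with sup_min assms(1,2) show ?thesis
    unfolding fle_def by linarith
qed

lemma fle_add_right: "fle \<nu> x y \<Longrightarrow> x \<in> V \<Longrightarrow> y \<in> V \<Longrightarrow> z \<in> V \<Longrightarrow> fle \<nu> (x + z) (y + z)"
  using riesz unfolding fuzzy_riesz_def fuzzy_ordered_linear_space_def fle_def by force

lemma fle_scaleR:
  assumes "fle \<nu> x y" "0 \<le> c" "x \<in> V" "y \<in> V"
  shows "fle \<nu> (c *\<^sub>R x) (c *\<^sub>R y)"
proof (cases "c = 0")
  case True
  then show ?thesis by (simp add: fle_refl)
next
  case False
  then have "\<nu> x y \<le> \<nu> (c *\<^sub>R x) (c *\<^sub>R y)"
    using riesz assms unfolding fuzzy_riesz_def fuzzy_ordered_linear_space_def fle_def by force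
  with assms(1) show ?thesis
    unfolding fle_def by linarith
qed

lemma fle_neg: "fle \<nu> x y \<Longrightarrow> x \<in> V \<Longrightarrow> y \<in> V \<Longrightarrow> fle \<nu> (- y) (- x)"
  using fle_add_right[of x y "- x - y"] by (simp add: algebra_simps)

lemma fle_diff_iff: "x \<in> V \<Longrightarrow> y \<in> V \<Longrightarrow> z \<in> V \<Longrightarrow> fle \<nu> (x - z) y \<longleftrightarrow> fle \<nu> x (y + z)"
  using fle_add_right[of "x - z" y z] fle_add_right[of x "y + z" "- z"] by auto

lemma fle_add_mono:
  assumes "fle \<nu> a b" "fle \<nu> c d" "a \<in> V" "b \<in> V" "c \<in> V" "d \<in> V"
  shows "fle \<nu> (a + c) (b + d)"
proof (rule fle_trans)
  show "fle \<nu> (a + c) (b + c)" using fle_add_right assms by blast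
  show "fle \<nu> (b + c) (b + d)" using fle_add_right[of c d b] assms by (simp add: add.commute)
qed (use assms in simp_all)

lemma is_sup_unique: "is_sup V \<nu> S s \<Longrightarrow> is_sup V \<nu> S t \<Longrightarrow> s = t"
  unfolding is_sup_def is_ub_def using fle_antisym by blast

lemma fsup_is_sup: "x \<in> V \<Longrightarrow> y \<in> V \<Longrightarrow> is_sup V \<nu> {x, y} (fsup V \<nu> x y)"
  using riesz is_sup_unique unfolding fuzzy_riesz_def fsup_def by (metis theI)

lemma fsup_eqI: "is_sup V \<nu> {x, y} s \<Longrightarrow> fsup V \<nu> x y = s"
  unfolding fsup_def using is_sup_unique by blast

lemma fsup_in [simp]: "x \<in> V \<Longrightarrow> y \<in> V \<Longrightarrow> fsup V \<nu> x y \<in> V"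
  using fsup_is_sup unfolding is_sup_def is_ub_def by blast

lemma fsup_upper1: "x \<in> V \<Longrightarrow> y \<in> V \<Longrightarrow> fle \<nu> x (fsup V \<nu> x y)"
  using fsup_is_sup unfolding is_sup_def is_ub_def by blast

lemma fsup_upper2: "x \<in> V \<Longrightarrow> y \<in> V \<Longrightarrow> fle \<nu> y (fsup V \<nu> x y)"
  using fsup_is_sup unfolding is_sup_def is_ub_def by blast

lemma fsup_least:
  "fle \<nu> x u \<Longrightarrow> fle \<nu> y u \<Longrightarrow> x \<in> V \<Longrightarrow> y \<in> V \<Longrightarrow> u \<in> V \<Longrightarrow> fle \<nu> (fsup V \<nu> x y) u"
  using fsup_is_sup unfolding is_sup_def is_ub_def by blast

text \<open>The positive part p = z \<or> 0 satisfies l p \<le> v for every l > 0, so p = 0.\<close>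

lemma archimedean_le_zero:
  assumes "fuzzy_archimedean V \<nu>" and z: "z \<in> V" and v: "v \<in> V" "fle \<nu> 0 v"
    and multiples_le: "\<And>k::nat. 0 < k \<Longrightarrow> fle \<nu> (real k *\<^sub>R z) v"
  shows "fle \<nu> z 0"
proof -
  define p where "p = fsup V \<nu> z 0"
  have p: "p \<in> V" "fle \<nu> 0 p" "fle \<nu> z p"
    unfolding p_def using z by (simp_all add: fsup_upper1 fsup_upper2)
  have p_le: "fle \<nu> p ((1 / real k) *\<^sub>R v)" if "0 < k" for k :: nat
  proof -
    have "fle \<nu> ((1 / real k) *\<^sub>R (real k *\<^sub>R z)) ((1 / real k) *\<^sub>R v)"
      using multiples_le[OF that] z v by (intro fle_scaleR) simp_all
    then have "fle \<nu> z ((1 / real k) *\<^sub>R v)"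
      using that by simp
    moreover have "fle \<nu> 0 ((1 / real k) *\<^sub>R v)"
      using fle_scaleR[OF v(2), of "1 / real k"] v by simp
    ultimately show ?thesis
      unfolding p_def using z v by (intro fsup_least) simp_all
  qed
  have "is_ub V \<nu> {l *\<^sub>R p | l::real. l > 0} v"
    unfolding is_ub_def
  proof (intro conjI ballI v)
    fix s assume "s \<in> {l *\<^sub>R p | l::real. l > 0}"
    then obtain l :: real where l: "l > 0" "s = l *\<^sub>R p" by blast
    define k where "k = nat \<lceil>l\<rceil>"
    have k: "0 < k" "l \<le> real k"
      using l unfolding k_def by linarith+
    have "fle \<nu> ((real k - l) *\<^sub>R 0) ((real k - l) *\<^sub>R p)"
      using p k by (intro fle_scaleR) simp_all
    then have "fle \<nu> (0 + l *\<^sub>R p) ((real k - l) *\<^sub>R p + l *\<^sub>R p)"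
      using p by (intro fle_add_right) simp_all
    then have "fle \<nu> (l *\<^sub>R p) (real k *\<^sub>R p)"
      by (simp add: algebra_simps)
    moreover have "fle \<nu> (real k *\<^sub>R p) (real k *\<^sub>R ((1 / real k) *\<^sub>R v))"
      using p_le[OF k(1)] p v by (intro fle_scaleR) simp_all
    ultimately show "fle \<nu> s v"
      using k p v l by (auto intro: fle_trans)
  qed
  then have "p = 0"
    using assms(1) p unfolding fuzzy_archimedean_def fpos_def by blast
  with p show ?thesis by simp
qed

end

locale fuzzy_riesz_lattice = E: fuzzy_riesz_space "UNIV :: 'a set" \<mu>
  for \<mu> :: "'a::real_vector \<Rightarrow> 'a \<Rightarrow> real"
begin

abbreviation esup :: "'a \<Rightarrow> 'a \<Rightarrow> 'a" where "esup \<equiv> fsup UNIV \<mu>"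
abbreviation eabs :: "'a \<Rightarrow> 'a" where "eabs \<equiv> fabs UNIV \<mu>"

definition einf :: "'a \<Rightarrow> 'a \<Rightarrow> 'a" where "einf x y = - esup (- x) (- y)"
definition fless :: "'a \<Rightarrow> 'a \<Rightarrow> bool" where "fless x y \<longleftrightarrow> fle \<mu> x y \<and> x \<noteq> y"

lemma einf_lower1: "fle \<mu> (einf x y) x"
  using E.fle_neg[OF E.fsup_upper1[of "- x" "- y"]] by (simp add: einf_def)

lemma einf_lower2: "fle \<mu> (einf x y) y"
  using E.fle_neg[OF E.fsup_upper2[of "- x" "- y"]] by (simp add: einf_def)

lemma einf_greatest: "fle \<mu> u x \<Longrightarrow> fle \<mu> u y \<Longrightarrow> fle \<mu> u (einf x y)"
  using E.fle_neg[OF E.fsup_least[OF E.fle_neg E.fle_neg]] by (simp add: einf_def)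

sublocale L: lattice_ab_group_add_abs eabs "(+)" 0 "(-)" uminus "fle \<mu>" fless einf esup
proof unfold_locales
  show "fless x y \<longleftrightarrow> fle \<mu> x y \<and> \<not> fle \<mu> y x" for x y
    unfolding fless_def using E.fle_antisym by auto
  show "fle \<mu> x y \<Longrightarrow> fle \<mu> y z \<Longrightarrow> fle \<mu> x z" for x y z
    by (rule E.fle_trans) simp_all
  show "fle \<mu> x y \<Longrightarrow> fle \<mu> y x \<Longrightarrow> x = y" for x y
    by (rule E.fle_antisym) simp_all
  show "fle \<mu> a b \<Longrightarrow> fle \<mu> (c + a) (c + b)" for a b c
    using E.fle_add_right[of a b c] by (simp add: add.commute)
  show "eabs a = esup a (- a)" for a
    by (simp add: fabs_def)
qed (simp_all add: E.fle_refl einf_lower1 einf_lower2 einf_greatest E.fsup_upper1 E.fsup_upper2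
       E.fsup_least)

sublocale O: ordered_real_vector "(+)" 0 "(-)" uminus "fle \<mu>" fless scaleR
proof unfold_locales
  show "fle \<mu> x y \<Longrightarrow> 0 \<le> a \<Longrightarrow> fle \<mu> (a *\<^sub>R x) (a *\<^sub>R y)" for x y :: 'a and a :: real
    by (rule E.fle_scaleR) simp_all
  show "fle \<mu> (a *\<^sub>R x) (b *\<^sub>R x)" if "a \<le> b" "fle \<mu> 0 x" for x :: 'a and a b :: real
  proof -
    have "fle \<mu> ((b - a) *\<^sub>R 0) ((b - a) *\<^sub>R x)"
      using that by (intro E.fle_scaleR) simp_all
    then have "fle \<mu> (0 + a *\<^sub>R x) ((b - a) *\<^sub>R x + a *\<^sub>R x)"
      by (intro E.fle_add_right) simp_all
    then show ?thesis
      by (simp add: algebra_simps)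
  qed
qed

lemma scaleR_esup:
  assumes c: "0 < c"
  shows "c *\<^sub>R esup a b = esup (c *\<^sub>R a) (c *\<^sub>R b)"
proof (rule L.order.antisym)
  show "fle \<mu> (esup (c *\<^sub>R a) (c *\<^sub>R b)) (c *\<^sub>R esup a b)"
    using c by (intro L.sup_least O.scaleR_left_mono L.sup_ge1 L.sup_ge2) simp_all
  have "fle \<mu> (esup a b) ((1 / c) *\<^sub>R esup (c *\<^sub>R a) (c *\<^sub>R b))"
    using c O.scaleR_left_mono[OF L.sup_ge1[of "c *\<^sub>R a" "c *\<^sub>R b"], of "1 / c"]
      O.scaleR_left_mono[OF L.sup_ge2[of "c *\<^sub>R b" "c *\<^sub>R a"], of "1 / c"]
    by (intro L.sup_least) simp_all
  from O.scaleR_left_mono[OF this, of c] c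
  show "fle \<mu> (c *\<^sub>R esup a b) (esup (c *\<^sub>R a) (c *\<^sub>R b))"
    by simp
qed

lemma scaleR_einf: "0 < c \<Longrightarrow> c *\<^sub>R einf a b = einf (c *\<^sub>R a) (c *\<^sub>R b)"
  unfolding einf_def scaleR_minus_right by (simp only: scaleR_esup scaleR_minus_right)

lemma eabs_scaleR: "eabs (c *\<^sub>R x) = \<bar>c\<bar> *\<^sub>R eabs x"
proof -
  have pos: "eabs (c *\<^sub>R x) = c *\<^sub>R eabs x" if "0 < c" for c
    using scaleR_esup[OF that, of x "- x"] by (simp add: fabs_def)
  consider "c = 0" | "c > 0" | "c < 0" by linarith
  then show ?thesis
  proof cases
    case 3
    then show ?thesis
      using pos[of "- c"] L.abs_minus_cancel[of "c *\<^sub>R x"] by simp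
  qed (simp_all add: pos)
qed

lemma einf_add_le:
  assumes "fle \<mu> 0 a" "fle \<mu> 0 b" "fle \<mu> 0 c"
  shows "fle \<mu> (einf (a + b) c) (einf a c + einf b c)"
proof -
  have "einf a c + einf b c = einf (einf (a + b) (a + c)) (einf (c + b) (c + c))"
    by (simp add: L.add_inf_distrib_left L.add_inf_distrib_right add.commute L.inf_aci)
  moreover have "fle \<mu> c (a + c)" "fle \<mu> c (c + b)" "fle \<mu> c (c + c)"
    using assms by (simp_all add: L.add_increasing L.add_increasing2)
  ultimately show ?thesis
    by (metis L.inf.coboundedI2 L.inf_greatest L.inf_le1)
qed

lemma einf_scaleR_le:
  assumes "1 \<le> c" "fle \<mu> 0 g"
  shows "fle \<mu> (einf (c *\<^sub>R a) g) (c *\<^sub>R einf a g)"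
proof -
  have "fle \<mu> g (c *\<^sub>R g)"
    using O.scaleR_right_mono[OF assms] by simp
  then have "fle \<mu> (einf (c *\<^sub>R a) g) (einf (c *\<^sub>R a) (c *\<^sub>R g))"
    by (simp add: L.inf.coboundedI2)
  also have "einf (c *\<^sub>R a) (c *\<^sub>R g) = c *\<^sub>R einf a g"
    using scaleR_einf[of c a g] assms(1) by simp
  finally show ?thesis .
qed

lemma einf_pprt_pprt_neg: "einf (L.pprt u) (L.pprt (- u)) = 0"
proof -
  have "einf (L.pprt u) (- L.nprt u) + L.nprt u = einf (L.pprt u + L.nprt u) 0"
    by (simp add: L.add_inf_distrib_right)
  also have "\<dots> = L.nprt u"
    using L.prts[of u] by (simp add: L.nprt_def)
  finally show ?thesis
    by (simp add: L.pprt_neg)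
qed

lemma eabs_esup_diff_le: "fle \<mu> (eabs (esup a b - esup c d)) (eabs (a - c) + eabs (b - d))"
proof -
  have upper: "fle \<mu> (esup a b - esup c d) (eabs (a - c) + eabs (b - d))" for a b c d
  proof -
    have "fle \<mu> a (c + eabs (a - c))" "fle \<mu> b (d + eabs (b - d))"
      using L.abs_ge_self[of "a - c"] L.abs_ge_self[of "b - d"] by (simp_all add: L.diff_le_eq add.commute)
    moreover have "fle \<mu> (c + eabs (a - c)) (esup c d + (eabs (a - c) + eabs (b - d)))"
      "fle \<mu> (d + eabs (b - d)) (esup c d + (eabs (a - c) + eabs (b - d)))"
      by (intro L.add_mono L.sup_ge1 L.sup_ge2 L.add_increasing2 L.add_increasing L.abs_ge_zero
          L.order_refl)+
    ultimately have "fle \<mu> (esup a b) (esup c d + (eabs (a - c) + eabs (b - d)))"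
      by (meson L.order_trans L.sup_least)
    then show ?thesis
      by (subst L.diff_le_eq) (simp only: add.commute)
  qed
  show ?thesis
  proof (rule L.abs_leI)
    show "fle \<mu> (- (esup a b - esup c d)) (eabs (a - c) + eabs (b - d))"
      using upper[of c d a b]
      by (simp only: minus_diff_eq L.abs_minus_commute[of c a] L.abs_minus_commute[of d b])
  qed (rule upper)
qed

lemma fuzzy_ideal_subspace: "fuzzy_ideal \<mu> A \<Longrightarrow> subspace A"
  by (simp add: fuzzy_ideal_def)

lemma fuzzy_ideal_solid: "fuzzy_ideal \<mu> A \<Longrightarrow> y \<in> A \<Longrightarrow> fle \<mu> (eabs x) (eabs y) \<Longrightarrow> x \<in> A"
  unfolding fuzzy_ideal_def by blast

lemma fuzzy_ideal_abs: "fuzzy_ideal \<mu> A \<Longrightarrow> a \<in> A \<Longrightarrow> eabs a \<in> A"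
  using fuzzy_ideal_solid[of A a "eabs a"] by (simp add: E.fle_refl)

lemma fuzzy_ideal_pos_le: "fuzzy_ideal \<mu> A \<Longrightarrow> y \<in> A \<Longrightarrow> fle \<mu> 0 x \<Longrightarrow> fle \<mu> x (eabs y) \<Longrightarrow> x \<in> A"
  by (erule fuzzy_ideal_solid) (simp_all add: L.abs_of_nonneg)

lemma fuzzy_ideal_common_upper:
  assumes "fuzzy_ideal \<mu> A" "a \<in> A" "b \<in> A"
  obtains c where "c \<in> A" "fle \<mu> 0 c" "fle \<mu> a c" "fle \<mu> b c"
proof
  show "eabs a + eabs b \<in> A"
    using assms fuzzy_ideal_abs fuzzy_ideal_subspace subspace_add by blast
  show "fle \<mu> a (eabs a + eabs b)"
    by (rule L.order_trans[OF L.abs_ge_self]) (intro L.add_increasing2 L.abs_ge_zero L.order_refl)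
  show "fle \<mu> b (eabs a + eabs b)"
    by (rule L.order_trans[OF L.abs_ge_self]) (intro L.add_increasing L.abs_ge_zero L.order_refl)
qed (simp add: L.add_nonneg_nonneg)

lemma is_sup_pprt_diff_scaleR:
  assumes y_inf: "is_inf UNIV \<mu> (range y) 0" and u: "fle \<mu> 0 u" and c: "0 < c"
  shows "is_sup UNIV \<mu> (range (\<lambda>m. L.pprt (u - c *\<^sub>R y m))) u"
  unfolding is_sup_def is_ub_def
proof (intro conjI allI impI ballI UNIV_I)
  fix s assume "s \<in> range (\<lambda>m. L.pprt (u - c *\<^sub>R y m))"
  then obtain m where s: "s = L.pprt (u - c *\<^sub>R y m)" by blast
  have "fle \<mu> 0 (c *\<^sub>R y m)"
    using y_inf c O.scaleR_left_mono[of 0 "y m" c] unfolding is_inf_def is_lb_def by simp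
  then show "fle \<mu> s u"
    unfolding s L.pprt_def using u by (simp add: L.diff_le_eq L.add_increasing2)
next
  fix v assume "v \<in> UNIV \<and> (\<forall>s\<in>range (\<lambda>m. L.pprt (u - c *\<^sub>R y m)). fle \<mu> s v)"
  then have "fle \<mu> (u - c *\<^sub>R y m) v" for m
    unfolding L.pprt_def by auto
  then have "fle \<mu> ((1 / c) *\<^sub>R (u - v)) ((1 / c) *\<^sub>R (c *\<^sub>R y m))" for m
    using c by (intro O.scaleR_left_mono) (simp_all add: L.diff_le_eq add.commute)
  then have "is_lb UNIV \<mu> (range y) ((1 / c) *\<^sub>R (u - v))"
    using c unfolding is_lb_def by auto
  then have "fle \<mu> (c *\<^sub>R ((1 / c) *\<^sub>R (u - v))) (c *\<^sub>R 0)"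
    using y_inf c unfolding is_inf_def by (intro O.scaleR_left_mono) simp_all
  then show "fle \<mu> u v"
    using c by simp
qed

lemma ru_conv_pprt_diff:
  assumes p: "fle \<mu> 0 p" and w: "fle \<mu> 0 w"
  shows "ru_conv \<mu> (\<lambda>n. L.pprt (p - (1 / (real n + 1)) *\<^sub>R w)) p"
  unfolding ru_conv_def fpos_def
proof (intro bexI[of _ w] allI impI)
  fix \<epsilon> :: real assume \<epsilon>: "\<epsilon> > 0"
  show "\<exists>N. \<forall>n>N. fle \<mu> (eabs (p - L.pprt (p - (1 / (real n + 1)) *\<^sub>R w))) (\<epsilon> *\<^sub>R w)"
  proof (intro exI[of _ "nat \<lceil>1 / \<epsilon>\<rceil>"] allI impI)
    fix n assume "n > nat \<lceil>1 / \<epsilon>\<rceil>"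
    then have "1 / \<epsilon> < real n + 1"
      by linarith
    then have "1 / (real n + 1) \<le> \<epsilon>"
      using \<epsilon> by (simp add: field_simps)
    then have small: "fle \<mu> ((1 / (real n + 1)) *\<^sub>R w) (\<epsilon> *\<^sub>R w)"
      using w by (rule O.scaleR_right_mono)
    define d where "d = (1 / (real n + 1)) *\<^sub>R w"
    have d: "fle \<mu> 0 d"
      using O.scaleR_left_mono[OF w, of "1 / (real n + 1)"] by (simp add: d_def)
    have "fle \<mu> (p - d) (L.pprt (p - d))"
      unfolding L.pprt_def by (rule L.sup_ge1)
    then have "fle \<mu> (p - L.pprt (p - d)) d"
      unfolding L.diff_le_eq by (simp only: add.commute)
    moreover have "fle \<mu> (L.pprt (p - d)) p"
      unfolding L.pprt_def using p d by (intro L.sup_least) (simp_all add: L.diff_le_eq)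
    ultimately have "fle \<mu> (eabs (p - L.pprt (p - d))) d"
      by (simp add: L.abs_of_nonneg)
    then show "fle \<mu> (eabs (p - L.pprt (p - (1 / (real n + 1)) *\<^sub>R w))) (\<epsilon> *\<^sub>R w)"
      using small unfolding d_def by (rule L.order_trans)
  qed
qed (use w in simp)

lemma forder_conv_diff_sup:
  assumes mono: "\<And>n. fle \<mu> (xs n) (xs (Suc n))" and sup: "is_sup UNIV \<mu> (range xs) x"
  shows "forder_conv UNIV \<mu> (\<lambda>n. x - xs n) 0"
  unfolding forder_conv_def
proof (intro exI[of _ "\<lambda>n. x - xs n"] conjI allI UNIV_I)
  have le_x: "fle \<mu> (xs n) x" for n
    using sup unfolding is_sup_def is_ub_def by blast
  show "fle \<mu> (x - xs (Suc n)) (x - xs n)" for n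
    using mono by (rule L.diff_left_mono)
  show "fle \<mu> (eabs (x - xs n - 0)) (x - xs n)" for n
    using le_x by (simp add: L.abs_of_nonneg)
  show "is_inf UNIV \<mu> (range (\<lambda>n. x - xs n)) 0"
    unfolding is_inf_def is_lb_def
  proof (intro conjI ballI allI impI UNIV_I)
    show "fle \<mu> 0 s" if "s \<in> range (\<lambda>n. x - xs n)" for s
      using that le_x by auto
    fix l assume "l \<in> UNIV \<and> (\<forall>s\<in>range (\<lambda>n. x - xs n). fle \<mu> l s)"
    then have "fle \<mu> (xs n) (x - l)" for n
      by (auto simp: L.le_diff_eq add.commute)
    then have "fle \<mu> x (x - l)"
      using sup unfolding is_sup_def is_ub_def by blast
    then show "fle \<mu> l 0"
      by (simp add: L.le_diff_eq)
  qed
qed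

lemma fuzzy_lattice_hom_imp_positive:
  assumes "fuzzy_riesz V \<nu>" "fuzzy_lattice_hom \<mu> V \<nu> T"
  shows "fuzzy_positive \<mu> V \<nu> T"
proof -
  interpret F: fuzzy_riesz_space V \<nu>
    by unfold_locales (fact assms(1))
  have T: "linear T" "\<And>x. T x \<in> V" "\<And>x y. T (esup x y) = fsup V \<nu> (T x) (T y)"
    using assms(2) unfolding fuzzy_lattice_hom_def by auto
  have "fle \<nu> 0 (T x)" if "fle \<mu> 0 x" for x
  proof -
    have "T x = fsup V \<nu> (T x) 0"
      using T(3)[of x 0] L.sup_absorb1[OF that] linear_0[OF T(1)] by simp
    with F.fsup_upper2[of "T x" 0] T(2) show ?thesis
      by (metis F.carrier_closed(1))
  qed
  with T show ?thesis
    unfolding fuzzy_positive_def by auto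
qed

lemma fhom_sigma_oc_property_if_fsigma_oc_property:
  "fsigma_oc_property \<mu> TYPE('b::real_vector) \<Longrightarrow> fhom_sigma_oc_property \<mu> TYPE('b)"
  unfolding fsigma_oc_property_def fhom_sigma_oc_property_def fuzzy_archimedean_def
  using fuzzy_lattice_hom_imp_positive by blast

end

definition closed_ideals_are_sigma :: "('a::real_vector \<Rightarrow> 'a \<Rightarrow> real) \<Rightarrow> bool" where
  "closed_ideals_are_sigma \<mu> \<longleftrightarrow>
     (\<forall>A. fuzzy_ideal \<mu> A \<and> uniformly_fuzzy_closed \<mu> A \<longrightarrow> fuzzy_sigma_ideal \<mu> A)"

locale positive_into_archimedean = fuzzy_riesz_lattice \<mu> + F: fuzzy_riesz_space V \<nu>
  for \<mu> :: "'a::real_vector \<Rightarrow> 'a \<Rightarrow> real" and V :: "'b::real_vector set" and \<nu> +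
  fixes T :: "'a \<Rightarrow> 'b"
  assumes archimedean: "fuzzy_archimedean V \<nu>"
    and positive: "fuzzy_positive \<mu> V \<nu> T"
begin

lemma T_linear: "linear T"
  using positive by (simp add: fuzzy_positive_def)

lemma T_in [simp]: "T x \<in> V"
  using positive by (auto simp: fuzzy_positive_def)

lemma T_nonneg: "fle \<mu> 0 x \<Longrightarrow> fle \<nu> 0 (T x)"
  using positive by (simp add: fuzzy_positive_def)

lemma T_mono: "fle \<mu> a b \<Longrightarrow> fle \<nu> (T a) (T b)"
proof -
  assume "fle \<mu> a b"
  then have "fle \<nu> 0 (T b - T a)"
    using T_nonneg[of "b - a"] by (simp add: linear_diff[OF T_linear])
  from F.fle_add_right[OF this, of "T a"] show ?thesis
    by simp
qed

definition T_trunc :: "(nat \<Rightarrow> 'a) \<Rightarrow> 'a \<Rightarrow> nat \<Rightarrow> 'b" where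
  "T_trunc g x n = T (einf (eabs x) (g n))"

definition null_along :: "(nat \<Rightarrow> 'a) \<Rightarrow> 'a set" where
  "null_along g = {x. \<forall>w\<in>V. (\<forall>n. fle \<nu> w (T_trunc g x n)) \<longrightarrow> fle \<nu> w 0}"

lemma null_alongI:
  "(\<And>w. w \<in> V \<Longrightarrow> (\<And>n. fle \<nu> w (T_trunc g x n)) \<Longrightarrow> fle \<nu> w 0) \<Longrightarrow> x \<in> null_along g"
  unfolding null_along_def by blast

lemma null_alongD:
  "x \<in> null_along g \<Longrightarrow> w \<in> V \<Longrightarrow> (\<And>n. fle \<nu> w (T_trunc g x n)) \<Longrightarrow> fle \<nu> w 0"
  unfolding null_along_def by blast

context
  fixes g :: "nat \<Rightarrow> 'a"
  assumes g_nonneg: "\<And>n. fle \<mu> 0 (g n)" and g_antitone: "\<And>n. fle \<mu> (g (Suc n)) (g n)"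
begin

lemma T_trunc_in [simp]: "T_trunc g x n \<in> V"
  by (simp add: T_trunc_def)

lemma T_trunc_antitone: "m \<le> n \<Longrightarrow> fle \<nu> (T_trunc g x n) (T_trunc g x m)"
  unfolding T_trunc_def
  by (intro T_mono L.inf_mono L.order_refl L.lift_Suc_antimono_le[of g, OF g_antitone])

lemma T_trunc_mono: "fle \<mu> (eabs x) (eabs y) \<Longrightarrow> fle \<nu> (T_trunc g x n) (T_trunc g y n)"
  unfolding T_trunc_def by (intro T_mono L.inf_mono L.order_refl)

lemma T_trunc_le_add:
  "fle \<mu> (eabs (x - y)) u \<Longrightarrow> fle \<nu> (T_trunc g x n) (T u + T_trunc g y n)"
proof -
  assume xy: "fle \<mu> (eabs (x - y)) u"
  have "fle \<mu> (einf (eabs x) (g n)) (einf (eabs (x - y) + eabs y) (g n))"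
    using L.abs_triangle_ineq[of "x - y" y] by (intro L.inf_mono L.order_refl) simp
  also have "fle \<mu> \<dots> (einf (eabs (x - y)) (g n) + einf (eabs y) (g n))"
    by (intro einf_add_le L.abs_ge_zero g_nonneg)
  also have "fle \<mu> \<dots> (u + einf (eabs y) (g n))"
    using xy by (intro L.add_right_mono L.order_trans[OF L.inf_le1])
  finally show ?thesis
    unfolding T_trunc_def linear_add[OF T_linear, symmetric] by (rule T_mono)
qed

lemma T_trunc_add_le: "fle \<nu> (T_trunc g (x + y) n) (T_trunc g x n + T_trunc g y n)"
proof -
  have "fle \<mu> (einf (eabs (x + y)) (g n)) (einf (eabs x + eabs y) (g n))"
    by (intro L.inf_mono L.order_refl L.abs_triangle_ineq)
  also have "fle \<mu> \<dots> (einf (eabs x) (g n) + einf (eabs y) (g n))"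
    by (intro einf_add_le L.abs_ge_zero g_nonneg)
  finally show ?thesis
    unfolding T_trunc_def linear_add[OF T_linear, symmetric] by (rule T_mono)
qed

lemma T_trunc_scaleR_le: "1 \<le> c \<Longrightarrow> fle \<nu> (T_trunc g (c *\<^sub>R x) n) (c *\<^sub>R T_trunc g x n)"
  using einf_scaleR_le[OF _ g_nonneg, of c "eabs x" n]
  unfolding T_trunc_def eabs_scaleR linear_scale[OF T_linear, symmetric]
  by (intro T_mono) simp

lemma null_along_zero: "0 \<in> null_along g"
proof (rule null_alongI)
  fix w assume "\<And>n. fle \<nu> w (T_trunc g 0 n)"
  moreover have "T_trunc g 0 0 = 0"
    using L.inf_absorb1[OF g_nonneg[of 0]] by (simp add: T_trunc_def linear_0[OF T_linear])
  ultimately show "fle \<nu> w 0"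
    by metis
qed

lemma null_along_add:
  assumes x: "x \<in> null_along g" and y: "y \<in> null_along g"
  shows "x + y \<in> null_along g"
proof (rule null_alongI)
  fix w assume w: "w \<in> V" and below: "\<And>n. fle \<nu> w (T_trunc g (x + y) n)"
  have "fle \<nu> w (T_trunc g x n + T_trunc g y m)" for n m
  proof -
    have "fle \<nu> w (T_trunc g x (max n m) + T_trunc g y (max n m))"
      using F.fle_trans[OF below[of "max n m"] T_trunc_add_le] w by simp
    moreover have "fle \<nu> \<dots> (T_trunc g x n + T_trunc g y m)"
      by (intro F.fle_add_mono T_trunc_antitone) simp_all
    ultimately show ?thesis
      using F.fle_trans w by simp
  qed
  then have "fle \<nu> (w - T_trunc g y m) 0" for m
    using w F.fle_diff_iff[of w "T_trunc g x _" "T_trunc g y m"] by (intro null_alongD[OF x]) simp_all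
  then have "fle \<nu> w (T_trunc g y m)" for m
    using w F.fle_diff_iff[of w 0 "T_trunc g y m"] by simp
  then show "fle \<nu> w 0"
    by (rule null_alongD[OF y w])
qed

lemma null_along_solid:
  assumes "fle \<mu> (eabs x) (eabs y)" "y \<in> null_along g"
  shows "x \<in> null_along g"
proof (rule null_alongI)
  fix w assume w: "w \<in> V" and below: "\<And>n. fle \<nu> w (T_trunc g x n)"
  show "fle \<nu> w 0"
  proof (rule null_alongD[OF assms(2) w])
    show "fle \<nu> w (T_trunc g y n)" for n
      using F.fle_trans[OF below T_trunc_mono[OF assms(1)]] w by simp
  qed
qed

lemma null_along_scaleR:
  assumes x: "x \<in> null_along g"
  shows "c *\<^sub>R x \<in> null_along g"
proof (cases "\<bar>c\<bar> \<le> 1")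
  case True
  have "fle \<mu> (eabs (c *\<^sub>R x)) (eabs x)"
    using O.scaleR_right_mono[OF True L.abs_ge_zero[of x]] by (simp add: eabs_scaleR)
  then show ?thesis
    using x by (rule null_along_solid)
next
  case False
  show ?thesis
  proof (rule null_alongI)
    fix w assume w: "w \<in> V" and below: "\<And>n. fle \<nu> w (T_trunc g (c *\<^sub>R x) n)"
    have c: "1 \<le> \<bar>c\<bar>" and c0: "c \<noteq> 0"
      using False by auto
    have "fle \<nu> w (\<bar>c\<bar> *\<^sub>R T_trunc g x n)" for n
    proof -
      have "fle \<nu> w (T_trunc g (\<bar>c\<bar> *\<^sub>R x) n)"
        using below[of n] by (simp add: T_trunc_def eabs_scaleR)
      from F.fle_trans[OF this T_trunc_scaleR_le[OF c]] w show ?thesis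
        by simp
    qed
    then have "fle \<nu> ((1 / \<bar>c\<bar>) *\<^sub>R w) (T_trunc g x n)" for n
      using F.fle_scaleR[of w "\<bar>c\<bar> *\<^sub>R T_trunc g x n" "1 / \<bar>c\<bar>"] c0 w by simp
    then have "fle \<nu> ((1 / \<bar>c\<bar>) *\<^sub>R w) 0"
      using w by (intro null_alongD[OF x]) simp_all
    then show "fle \<nu> w 0"
      using F.fle_scaleR[of "(1 / \<bar>c\<bar>) *\<^sub>R w" 0 "\<bar>c\<bar>"] c0 w by simp
  qed
qed

lemma fuzzy_ideal_null_along: "fuzzy_ideal \<mu> (null_along g)"
  unfolding fuzzy_ideal_def subspace_def
  using null_along_zero null_along_add null_along_scaleR null_along_solid by blast

lemma uniformly_fuzzy_closed_null_along: "uniformly_fuzzy_closed \<mu> (null_along g)"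
  unfolding uniformly_fuzzy_closed_def
proof (intro allI impI, elim conjE)
  fix xs x assume xs: "\<forall>n. xs n \<in> null_along g" and "ru_conv \<mu> xs x"
  then obtain u where u: "fle \<mu> 0 u"
    and close: "\<And>\<epsilon>::real. \<epsilon> > 0 \<Longrightarrow> \<exists>N. \<forall>n>N. fle \<mu> (eabs (x - xs n)) (\<epsilon> *\<^sub>R u)"
    unfolding ru_conv_def fpos_def by blast
  show "x \<in> null_along g"
  proof (rule null_alongI)
    fix w assume w: "w \<in> V" and below: "\<And>n. fle \<nu> w (T_trunc g x n)"
    show "fle \<nu> w 0"
    proof (rule F.archimedean_le_zero[OF archimedean w T_in T_nonneg[OF u]])
      fix k :: nat assume k: "0 < k"
      obtain N where "\<forall>n>N. fle \<mu> (eabs (x - xs n)) ((1 / real k) *\<^sub>R u)"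
        using close[of "1 / real k"] k by auto
      then have "fle \<mu> (eabs (x - xs (Suc N))) ((1 / real k) *\<^sub>R u)"
        by simp
      from T_trunc_le_add[OF this]
      have "fle \<nu> (T_trunc g x n) ((1 / real k) *\<^sub>R T u + T_trunc g (xs (Suc N)) n)" for n
        by (simp add: linear_scale[OF T_linear])
      then have "fle \<nu> (w - (1 / real k) *\<^sub>R T u) (T_trunc g (xs (Suc N)) n)" for n
        using below[of n] w by (auto simp: F.fle_diff_iff add.commute intro: F.fle_trans)
      moreover have "xs (Suc N) \<in> null_along g"
        using xs by simp
      ultimately have "fle \<nu> (w - (1 / real k) *\<^sub>R T u) 0"
        using w by (intro null_alongD[of "xs (Suc N)"]) simp_all
      then have "fle \<nu> (real k *\<^sub>R w) (real k *\<^sub>R ((1 / real k) *\<^sub>R T u))"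
        using w by (intro F.fle_scaleR) (simp_all add: F.fle_diff_iff)
      then show "fle \<nu> (real k *\<^sub>R w) (T u)"
        using k by simp
    qed
  qed
qed

end

lemma null_along_if_disjoint: "einf (eabs x) (g m) = 0 \<Longrightarrow> x \<in> null_along g"
proof (rule null_alongI)
  fix w assume "einf (eabs x) (g m) = 0" "\<And>n. fle \<nu> w (T_trunc g x n)"
  then show "fle \<nu> w 0"
    by (metis T_trunc_def linear_0[OF T_linear])
qed

lemma scaleR_in_null_along:
  assumes closed_sigma: "closed_ideals_are_sigma \<mu>"
    and y_antitone: "\<And>n. fle \<mu> (y (Suc n)) (y n)" and y_inf: "is_inf UNIV \<mu> (range y) 0"
    and c: "1 \<le> c"
  shows "c *\<^sub>R y 0 \<in> null_along (\<lambda>n. L.pprt (c *\<^sub>R y n - y 0))"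
proof -
  define g where "g n = L.pprt (c *\<^sub>R y n - y 0)" for n
  have g_nonneg: "fle \<mu> 0 (g n)" for n
    unfolding g_def by simp
  have g_antitone: "fle \<mu> (g (Suc n)) (g n)" for n
    unfolding g_def using c y_antitone
    by (intro L.pprt_mono L.diff_right_mono O.scaleR_left_mono) simp_all
  have sigma: "fuzzy_sigma_ideal \<mu> (null_along g)"
    using closed_sigma fuzzy_ideal_null_along[of g, OF g_nonneg g_antitone]
      uniformly_fuzzy_closed_null_along[of g, OF g_nonneg g_antitone]
    unfolding closed_ideals_are_sigma_def by blast
  define e where "e m = L.pprt (y 0 - c *\<^sub>R y m)" for m
  have e_nonneg: "fle \<mu> 0 (e m)" for m
    unfolding e_def by simp
  have e_null: "e m \<in> null_along g" for m
    using einf_pprt_pprt_neg[of "y 0 - c *\<^sub>R y m"]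
    by (intro null_along_if_disjoint[of _ _ m]) (simp add: e_def g_def L.abs_of_nonneg)
  have e_mono: "fle \<mu> (e m) (e (Suc m))" for m
    unfolding e_def using c y_antitone
    by (intro L.pprt_mono L.diff_left_mono O.scaleR_left_mono) simp_all
  have "is_sup UNIV \<mu> (range e) (y 0)"
    unfolding e_def using is_sup_pprt_diff_scaleR[OF y_inf] y_inf c
    unfolding is_inf_def is_lb_def by simp
  then have "y 0 \<in> null_along g"
    using sigma e_null e_nonneg e_mono unfolding fuzzy_sigma_ideal_def fpos_def by blast
  then show ?thesis
    unfolding g_def[symmetric] by (rule null_along_scaleR[of g, OF g_nonneg g_antitone])
qed

lemma scaleR_lower_bound_le:
  assumes closed_sigma: "closed_ideals_are_sigma \<mu>"
    and y_antitone: "\<And>n. fle \<mu> (y (Suc n)) (y n)" and y_inf: "is_inf UNIV \<mu> (range y) 0"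
    and z: "z \<in> V" "\<And>n. fle \<nu> z (T (y n))" and c: "1 \<le> c"
  shows "fle \<nu> (c *\<^sub>R z) (T (y 0))"
proof -
  define g where "g n = L.pprt (c *\<^sub>R y n - y 0)" for n
  have cy_nonneg: "fle \<mu> 0 (c *\<^sub>R y n)" for n
    using y_inf c O.scaleR_left_mono[of 0 "y n" c] unfolding is_inf_def is_lb_def by simp
  have "fle \<nu> (c *\<^sub>R z - T (y 0)) (T_trunc g (c *\<^sub>R y 0) n)" for n
  proof -
    have "fle \<mu> (c *\<^sub>R y n) (c *\<^sub>R y 0)"
      using c by (intro O.scaleR_left_mono L.lift_Suc_antimono_le[of y, OF y_antitone]) simp_all
    then have "fle \<mu> (g n) (c *\<^sub>R y 0)"
      unfolding g_def L.pprt_def using cy_nonneg[of 0] y_inf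
      unfolding is_inf_def is_lb_def by (intro L.sup_least) (simp_all add: L.diff_le_eq L.add_increasing2)
    then have "T_trunc g (c *\<^sub>R y 0) n = T (g n)"
      using cy_nonneg[of 0] by (simp add: T_trunc_def L.abs_of_nonneg L.inf_absorb2)
    moreover have "fle \<nu> (c *\<^sub>R z - T (y 0)) (T (c *\<^sub>R y n - y 0))"
      using F.fle_add_right[OF F.fle_scaleR[OF z(2)[of n]], of c "- T (y 0)"] c z(1)
      by (simp add: linear_diff[OF T_linear] linear_scale[OF T_linear])
    moreover have "fle \<nu> (T (c *\<^sub>R y n - y 0)) (T (g n))"
      unfolding g_def L.pprt_def by (intro T_mono L.sup_ge1)
    ultimately show ?thesis
      using F.fle_trans z(1) by simp
  qed
  moreover have "c *\<^sub>R y 0 \<in> null_along g"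
    using scaleR_in_null_along[OF assms(1-3) c] by (simp add: g_def[abs_def])
  ultimately have "fle \<nu> (c *\<^sub>R z - T (y 0)) 0"
    using z(1) by (intro null_alongD[of "c *\<^sub>R y 0" g]) simp_all
  then show ?thesis
    using F.fle_diff_iff[of "c *\<^sub>R z" 0 "T (y 0)"] z(1) by simp
qed

lemma is_inf_T_image:
  assumes closed_sigma: "closed_ideals_are_sigma \<mu>"
    and y_antitone: "\<And>n. fle \<mu> (y (Suc n)) (y n)" and y_inf: "is_inf UNIV \<mu> (range y) 0"
  shows "is_inf V \<nu> (range (T \<circ> y)) 0"
  unfolding is_inf_def is_lb_def
proof (intro conjI ballI allI impI F.carrier_closed(1))
  have y_nonneg: "fle \<mu> 0 (y n)" for n
    using y_inf unfolding is_inf_def is_lb_def by auto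
  then show "fle \<nu> 0 s" if "s \<in> range (T \<circ> y)" for s
    using that T_nonneg by auto
  fix z assume "z \<in> V \<and> (\<forall>s\<in>range (T \<circ> y). fle \<nu> z s)"
  then show "fle \<nu> z 0"
    using scaleR_lower_bound_le[OF assms] y_nonneg
    by (intro F.archimedean_le_zero[OF archimedean _ T_in T_nonneg[OF y_nonneg[of 0]]]) auto
qed

lemma sigma_order_continuous:
  assumes "closed_ideals_are_sigma \<mu>"
  shows "fsigma_order_continuous \<mu> V \<nu> T"
  unfolding fsigma_order_continuous_def
proof (intro allI impI)
  fix xs assume "forder_conv UNIV \<mu> xs 0"
  then obtain y where y_antitone: "\<And>n. fle \<mu> (y (Suc n)) (y n)"
    and y_inf: "is_inf UNIV \<mu> (range y) 0" and xs_le: "\<And>n. fle \<mu> (eabs (xs n)) (y n)"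
    unfolding forder_conv_def by auto
  have "fle \<nu> (fabs V \<nu> (T (xs n))) (T (y n))" for n
  proof -
    have "fle \<nu> (T (xs n)) (T (y n))" "fle \<nu> (T (- xs n)) (T (y n))"
      using L.order_trans[OF L.abs_ge_self xs_le] L.order_trans[OF L.abs_ge_minus_self xs_le]
      by (simp_all add: T_mono)
    then show ?thesis
      unfolding fabs_def by (intro F.fsup_least) (simp_all add: linear_neg[OF T_linear])
  qed
  then show "forder_conv V \<nu> (T \<circ> xs) 0"
    unfolding forder_conv_def using T_mono y_antitone is_inf_T_image[OF assms y_antitone y_inf]
    by (intro exI[of _ "T \<circ> y"]) auto
qed

end

lemma (in fuzzy_riesz_lattice) fsigma_oc_property_if_closed_ideals_are_sigma:
  assumes "closed_ideals_are_sigma \<mu>"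
  shows "fsigma_oc_property \<mu> TYPE('b::real_vector)"
  unfolding fsigma_oc_property_def
proof (intro allI impI, elim conjE)
  fix V :: "'b set" and \<nu> T
  assume "fuzzy_archimedean V \<nu>" "fuzzy_positive \<mu> V \<nu> T"
  then interpret positive_into_archimedean \<mu> V \<nu> T
    by unfold_locales (simp_all add: fuzzy_archimedean_def E.riesz)
  show "fsigma_order_continuous \<mu> V \<nu> T"
    using sigma_order_continuous assms .
qed

lemma linear_retraction_exists:
  fixes A :: "'a::real_vector set"
  assumes "subspace A"
  obtains Q where "linear Q" "\<And>x. Q x \<in> A" "\<And>a. a \<in> A \<Longrightarrow> Q a = a"
proof -
  obtain B where B: "B \<subseteq> A" "independent B" "A \<subseteq> span B"
    by (rule maximal_independent_subset)
  define Q where "Q = construct B (\<lambda>x. x)"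
  show ?thesis
  proof
    show Q: "linear Q"
      unfolding Q_def by (rule linear_construct[OF B(2)])
    show "Q x \<in> A" for x
      using construct_in_span[OF B(2), of "\<lambda>x. x" x] span_minimal[OF B(1) assms]
      by (auto simp: Q_def)
    show "Q a = a" if "a \<in> A" for a
      using that B(3) by (intro linear_eq_on[OF Q linear_ident, of a B])
        (auto simp: Q_def construct_basis[OF B(2)])
  qed
qed

text \<open>The quotient E/A is represented on the complement W = range P of A, where P = id - Q
  for a linear retraction Q onto A, ordered crisply by x \<le> y iff x \<le> y + a for some a in A.\<close>

locale fuzzy_quotient = fuzzy_riesz_lattice \<mu> for \<mu> :: "'a::real_vector \<Rightarrow> 'a \<Rightarrow> real" +
  fixes A :: "'a set" and Q :: "'a \<Rightarrow> 'a"
  assumes ideal: "fuzzy_ideal \<mu> A" and closed: "uniformly_fuzzy_closed \<mu> A"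
    and Q_linear: "linear Q" and Q_in: "\<And>x. Q x \<in> A" and Q_id: "\<And>a. a \<in> A \<Longrightarrow> Q a = a"
begin

definition P :: "'a \<Rightarrow> 'a" where "P x = x - Q x"
definition W :: "'a set" where "W = range P"
definition qle :: "'a \<Rightarrow> 'a \<Rightarrow> bool" where "qle x y \<longleftrightarrow> (\<exists>a\<in>A. fle \<mu> x (y + a))"
definition qnu :: "'a \<Rightarrow> 'a \<Rightarrow> real" where "qnu x y = (if qle x y then 1 else 0)"

lemma fle_qnu_iff [simp]: "fle qnu x y \<longleftrightarrow> qle x y"
  by (simp add: fle_def qnu_def)

lemma A_subspace: "subspace A"
  using ideal by (rule fuzzy_ideal_subspace)

lemma P_linear: "linear P"
  unfolding P_def[abs_def] by (intro linear_compose_sub linear_ident Q_linear)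

lemma P_in_W [simp]: "P x \<in> W"
  by (simp add: W_def)

lemma W_subspace: "subspace W"
  unfolding W_def by (rule real_vector.linear_subspace_image[OF P_linear subspace_UNIV])

lemma diff_P_in_A: "x - P x \<in> A" "P x - x \<in> A"
  using Q_in[of x] subspace_neg[OF A_subspace Q_in[of x]] by (simp_all add: P_def)

lemma P_A: "a \<in> A \<Longrightarrow> P a = 0"
  by (simp add: P_def Q_id)

lemma P_W: "w \<in> W \<Longrightarrow> P w = w"
  unfolding W_def P_def using Q_id[OF Q_in] by (auto simp: linear_diff[OF Q_linear])

lemma A_inter_W: "x \<in> A \<Longrightarrow> x \<in> W \<Longrightarrow> x = 0"
  using P_A P_W by force

lemma qle_if_fle: "fle \<mu> x y \<Longrightarrow> qle x y"
  unfolding qle_def using subspace_0[OF A_subspace] by force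

lemma qle_refl: "qle x x"
  by (simp add: qle_if_fle)

lemma qle_trans:
  assumes "qle x y" "qle y z"
  shows "qle x z"
proof -
  obtain a b where ab: "a \<in> A" "fle \<mu> x (y + a)" "b \<in> A" "fle \<mu> y (z + b)"
    using assms unfolding qle_def by blast
  have "fle \<mu> (y + a) (z + b + a)"
    using ab(4) by (rule L.add_right_mono)
  with ab(2) have "fle \<mu> x (z + (b + a))"
    by (simp add: L.order_trans add.assoc)
  then show ?thesis
    unfolding qle_def using subspace_add[OF A_subspace ab(3,1)] by blast
qed

lemma qle_add_right:
  assumes "qle x y"
  shows "qle (x + z) (y + z)"
proof -
  obtain a where a: "a \<in> A" "fle \<mu> x (y + a)"
    using assms unfolding qle_def by blast
  have "fle \<mu> (x + z) (y + z + a)"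
    using L.add_right_mono[OF a(2), of z] by (simp add: add_ac)
  with a(1) show ?thesis
    unfolding qle_def by blast
qed

lemma qle_scaleR:
  assumes "qle x y" "0 \<le> c"
  shows "qle (c *\<^sub>R x) (c *\<^sub>R y)"
proof -
  obtain a where a: "a \<in> A" "fle \<mu> x (y + a)"
    using assms unfolding qle_def by blast
  have "fle \<mu> (c *\<^sub>R x) (c *\<^sub>R y + c *\<^sub>R a)"
    using O.scaleR_left_mono[OF a(2) assms(2)] by (simp add: scaleR_add_right)
  with subspace_scale[OF A_subspace a(1)] show ?thesis
    unfolding qle_def by blast
qed

lemma qle_P: "qle x (P x)" "qle (P x) x"
proof -
  have "fle \<mu> x (P x + (x - P x))" "fle \<mu> (P x) (x + (P x - x))"
    by (simp_all add: L.order_refl)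
  then show "qle x (P x)" "qle (P x) x"
    unfolding qle_def using diff_P_in_A by blast+
qed

lemma qle_bounds:
  assumes "qle x y" "qle x' y'"
  obtains c where "c \<in> A" "fle \<mu> 0 c" "fle \<mu> x (y + c)" "fle \<mu> x' (y' + c)"
proof -
  obtain a b where ab: "a \<in> A" "fle \<mu> x (y + a)" "b \<in> A" "fle \<mu> x' (y' + b)"
    using assms unfolding qle_def by blast
  obtain c where c: "c \<in> A" "fle \<mu> 0 c" "fle \<mu> a c" "fle \<mu> b c"
    using fuzzy_ideal_common_upper[OF ideal ab(1,3)] by blast
  show ?thesis
    using c(1,2) L.order_trans[OF ab(2) L.add_left_mono[OF c(3)]]
      L.order_trans[OF ab(4) L.add_left_mono[OF c(4)]] by (rule that)
qed

lemma qle_esup_least: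
  assumes "qle x u" "qle y u"
  shows "qle (esup x y) u"
proof -
  obtain c where "c \<in> A" "fle \<mu> x (u + c)" "fle \<mu> y (u + c)"
    using assms by (rule qle_bounds)
  then show ?thesis
    unfolding qle_def by (blast intro: L.sup_least)
qed

lemma qle_einf_greatest:
  assumes "qle u x" "qle u y"
  shows "qle u (einf x y)"
proof -
  obtain c where "c \<in> A" "fle \<mu> u (x + c)" "fle \<mu> u (y + c)"
    using assms by (rule qle_bounds)
  then have "c \<in> A" "fle \<mu> u (einf x y + c)"
    unfolding L.add_inf_distrib_right by (blast intro: L.inf_greatest)+
  then show ?thesis
    unfolding qle_def by blast
qed

lemma qle_antisym:
  assumes "qle x y" "qle y x"
  shows "x - y \<in> A"
proof -
  have "qle (x - y) 0" "qle (y - x) 0"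
    using qle_add_right[OF assms(1), of "- y"] qle_add_right[OF assms(2), of "- x"] by simp_all
  then obtain c where c: "c \<in> A" "fle \<mu> 0 c" "fle \<mu> (x - y) (0 + c)" "fle \<mu> (y - x) (0 + c)"
    by (rule qle_bounds)
  then have "fle \<mu> (eabs (x - y)) (eabs c)"
    by (simp add: L.abs_leI L.abs_of_nonneg)
  then show "x - y \<in> A"
    using fuzzy_ideal_solid[OF ideal c(1)] by blast
qed

lemma is_sup_quotient: "is_sup W qnu {x, y} (P (esup x y))"
  unfolding is_sup_def is_ub_def fle_qnu_iff
  using qle_trans[OF qle_if_fle[OF L.sup_ge1] qle_P(1)] qle_trans[OF qle_if_fle[OF L.sup_ge2] qle_P(1)]
    qle_trans[OF qle_P(2) qle_esup_least] by auto

lemma is_inf_quotient: "is_inf W qnu {x, y} (P (einf x y))"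
  unfolding is_inf_def is_lb_def fle_qnu_iff
  using qle_trans[OF qle_P(2) qle_if_fle[OF L.inf_le1]] qle_trans[OF qle_P(2) qle_if_fle[OF L.inf_le2]]
    qle_trans[OF qle_einf_greatest qle_P(1)] by auto

lemma fuzzy_order_quotient: "fuzzy_order W qnu"
  unfolding fuzzy_order_def
proof (intro conjI ballI impI)
  fix x y assume x: "x \<in> W" and y: "y \<in> W" and "qnu x y + qnu y x > 1"
  then have "x - y \<in> A"
    by (intro qle_antisym) (auto simp: qnu_def split: if_splits)
  with x y show "x = y"
    using A_inter_W subspace_diff[OF W_subspace x y] by force
next
  fix x z assume "x \<in> W"
  show "(SUP y\<in>W. min (qnu x y) (qnu y z)) \<le> qnu x z"
  proof (rule cSUP_least)
    show "W \<noteq> {}"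
      using P_in_W by blast
    show "min (qnu x y) (qnu y z) \<le> qnu x z" for y
      using qle_trans[of x y z] by (simp add: qnu_def)
  qed
qed (simp_all add: qnu_def qle_refl)

lemma fuzzy_riesz_quotient: "fuzzy_riesz W qnu"
  unfolding fuzzy_riesz_def fuzzy_ordered_linear_space_def
proof (intro conjI ballI impI allI W_subspace fuzzy_order_quotient)
  fix x1 x2 assume "qnu x1 x2 > 1/2"
  then have "qle x1 x2"
    by (simp add: qnu_def split: if_splits)
  then show "qnu x1 x2 \<le> qnu (x1 + x) (x2 + x)" and "\<alpha> > 0 \<Longrightarrow> qnu x1 x2 \<le> qnu (\<alpha> *\<^sub>R x1) (\<alpha> *\<^sub>R x2)"
    for x and \<alpha> :: real
    using qle_add_right qle_scaleR by (simp_all add: qnu_def)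
next
  show "\<exists>s. is_sup W qnu {x, y} s" "\<exists>i. is_inf W qnu {x, y} i" for x y
    using is_sup_quotient is_inf_quotient by blast+
qed

lemma fsup_quotient: "fsup W qnu x y = P (esup x y)"
  by (rule fuzzy_riesz_space.fsup_eqI[OF _ is_sup_quotient]) (unfold_locales, rule fuzzy_riesz_quotient)

lemma fabs_quotient: "fabs W qnu x = P (eabs x)"
  by (simp add: fabs_def fsup_quotient)

lemma fuzzy_lattice_hom_P: "fuzzy_lattice_hom \<mu> W qnu P"
  unfolding fuzzy_lattice_hom_def fsup_quotient
proof (intro conjI allI P_linear)
  fix x y
  have "fle \<mu> (eabs (esup x y - esup (P x) (P y))) (eabs (eabs (x - P x) + eabs (y - P y)))"
    using eabs_esup_diff_le by (simp add: L.abs_of_nonneg L.add_nonneg_nonneg)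
  then have "esup x y - esup (P x) (P y) \<in> A"
    using fuzzy_ideal_solid[OF ideal] fuzzy_ideal_abs[OF ideal] diff_P_in_A(1) subspace_add[OF A_subspace]
    by blast
  then have "P (esup x y - esup (P x) (P y)) = 0"
    by (rule P_A)
  then show "P (esup x y) = P (esup (P x) (P y))"
    unfolding linear_diff[OF P_linear] by simp
qed auto

lemma pprt_in_A_if_multiples_bounded:
  assumes bounded: "\<And>n. qle ((real n + 1) *\<^sub>R x) u"
  shows "L.pprt x \<in> A"
proof -
  define \<delta> where "\<delta> n = 1 / (real n + 1)" for n :: nat
  have \<delta>: "\<delta> n > 0" for n
    by (simp add: \<delta>_def)
  obtain a where a_in: "\<And>n. a n \<in> A" and a_bound: "\<And>n. fle \<mu> ((real n + 1) *\<^sub>R x) (u + a n)"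
    using bounded unfolding qle_def by metis
  define v where "v n = L.pprt (L.pprt x - \<delta> n *\<^sub>R eabs u)" for n
  have "v n \<in> A" for n
    unfolding v_def
  proof (rule fuzzy_ideal_pos_le[OF ideal subspace_scale[OF A_subspace a_in]])
    have "fle \<mu> x (\<delta> n *\<^sub>R u + \<delta> n *\<^sub>R a n)"
      using O.scaleR_left_mono[OF a_bound[of n], of "\<delta> n"] \<delta>[of n]
      by (simp add: \<delta>_def scaleR_add_right)
    also have "fle \<mu> \<dots> (\<delta> n *\<^sub>R eabs u + \<delta> n *\<^sub>R eabs (a n))"
      using \<delta>[of n] by (intro L.add_mono O.scaleR_left_mono L.abs_ge_self) simp_all
    finally have "fle \<mu> (L.pprt x - \<delta> n *\<^sub>R eabs u) (\<delta> n *\<^sub>R eabs (a n))"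
      using \<delta>[of n] O.scaleR_left_mono[OF L.abs_ge_zero, of "\<delta> n"]
      unfolding L.pprt_def by (simp add: L.diff_le_eq add.commute L.add_increasing2 L.add_nonneg_nonneg)
    then show "fle \<mu> (L.pprt (L.pprt x - \<delta> n *\<^sub>R eabs u)) (eabs (\<delta> n *\<^sub>R a n))"
      using \<delta>[of n] O.scaleR_left_mono[OF L.abs_ge_zero, of "\<delta> n"]
      unfolding L.pprt_def by (simp add: eabs_scaleR)
  qed simp
  moreover have "ru_conv \<mu> v (L.pprt x)"
    unfolding v_def \<delta>_def by (intro ru_conv_pprt_diff) simp_all
  ultimately show ?thesis
    using closed unfolding uniformly_fuzzy_closed_def by blast
qed

lemma fuzzy_archimedean_quotient: "fuzzy_archimedean W qnu"
  unfolding fuzzy_archimedean_def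
proof (intro conjI fuzzy_riesz_quotient ballI impI notI)
  fix x assume x: "x \<in> fpos W qnu" "x \<noteq> 0" and "\<exists>u. is_ub W qnu {l *\<^sub>R x | l::real. l > 0} u"
  then obtain u where "\<And>l::real. l > 0 \<Longrightarrow> qle (l *\<^sub>R x) u"
    unfolding is_ub_def by auto
  then have "qle ((real n + 1) *\<^sub>R x) u" for n :: nat
    by simp
  then have pprt_A: "L.pprt x \<in> A"
    by (rule pprt_in_A_if_multiples_bounded)
  obtain a where "a \<in> A" "fle \<mu> 0 (x + a)"
    using x unfolding fpos_def fle_qnu_iff qle_def by auto
  then have "fle \<mu> (- x) a"
    using L.add_right_mono[of 0 "x + a" "- x"] by simp
  then have "fle \<mu> (L.pprt (- x)) (eabs a)"
    unfolding L.pprt_def by (intro L.sup_least L.abs_ge_zero L.order_trans[OF _ L.abs_ge_self])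
  then have "fle \<mu> (eabs (L.nprt x)) (eabs a)"
    by (simp add: L.abs_of_nonpos L.pprt_neg)
  then have "L.nprt x \<in> A"
    using fuzzy_ideal_solid[OF ideal \<open>a \<in> A\<close>] by blast
  then have "x \<in> A"
    using subspace_add[OF A_subspace pprt_A] L.prts[of x] by metis
  with x show False
    using A_inter_W unfolding fpos_def by blast
qed

lemma in_A_if_constant_forder_conv: "forder_conv W qnu (\<lambda>n. P x) 0 \<Longrightarrow> x \<in> A"
proof -
  assume "forder_conv W qnu (\<lambda>n. P x) 0"
  then obtain y :: "nat \<Rightarrow> 'a" where "is_inf W qnu (range y) 0" "\<forall>n. qle (P (eabs (P x))) (y n)"
    unfolding forder_conv_def fabs_quotient fle_qnu_iff diff_zero by blast
  then have "qle (P (eabs (P x))) 0"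
    unfolding is_inf_def is_lb_def by auto
  then obtain a where "a \<in> A" "fle \<mu> (eabs (P x)) a"
    using qle_trans[OF qle_P(1)] unfolding qle_def by fastforce
  then have "P x \<in> A"
    using fuzzy_ideal_solid[OF ideal] L.order_trans[OF _ L.abs_ge_self] by blast
  then show "x \<in> A"
    using A_inter_W[of "P x"] diff_P_in_A(1)[of x] by simp
qed

end

lemma (in fuzzy_riesz_lattice) closed_ideals_are_sigma_if_fhom_sigma_oc_property:
  assumes "fhom_sigma_oc_property \<mu> TYPE('a)"
  shows "closed_ideals_are_sigma \<mu>"
  unfolding closed_ideals_are_sigma_def
proof (intro allI impI, elim conjE)
  fix A assume ideal: "fuzzy_ideal \<mu> A" and closed: "uniformly_fuzzy_closed \<mu> A"
  obtain Q where "linear Q" "\<And>x. Q x \<in> A" "\<And>a. a \<in> A \<Longrightarrow> Q a = a"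
    using linear_retraction_exists[OF fuzzy_ideal_subspace[OF ideal]] by blast
  then interpret fuzzy_quotient \<mu> A Q
    using fuzzy_riesz_lattice_axioms ideal closed
    by (intro fuzzy_quotient.intro fuzzy_quotient_axioms.intro)
  have continuous: "fsigma_order_continuous \<mu> W qnu P"
    using assms fuzzy_archimedean_quotient fuzzy_lattice_hom_P
    unfolding fhom_sigma_oc_property_def by blast
  show "fuzzy_sigma_ideal \<mu> A"
    unfolding fuzzy_sigma_ideal_def
  proof (intro conjI ideal allI impI, elim conjE)
    fix xs x assume xs: "\<forall>n. xs n \<in> A \<inter> fpos UNIV \<mu>" "\<forall>n. fle \<mu> (xs n) (xs (Suc n))"
      and "is_sup UNIV \<mu> (range xs) x"
    then have "forder_conv W qnu (P \<circ> (\<lambda>n. x - xs n)) 0"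
      using continuous forder_conv_diff_sup unfolding fsigma_order_continuous_def by blast
    moreover have "P \<circ> (\<lambda>n. x - xs n) = (\<lambda>n. P x)"
      using xs(1) P_A by (auto simp: linear_diff[OF P_linear])
    ultimately show "x \<in> A"
      using in_A_if_constant_forder_conv by simp
  qed
qed

theorem theorem4p8:
  fixes \<mu> :: "'a::real_vector \<Rightarrow> 'a \<Rightarrow> real"
  assumes "fuzzy_riesz UNIV \<mu>"
  defines "P3 \<equiv> (\<forall>A. fuzzy_ideal \<mu> A \<and> uniformly_fuzzy_closed \<mu> A \<longrightarrow> fuzzy_sigma_ideal \<mu> A)"
  shows "(fsigma_oc_property \<mu> TYPE('a) \<longleftrightarrow> fhom_sigma_oc_property \<mu> TYPE('a))
     \<and> (fhom_sigma_oc_property \<mu> TYPE('a) \<longleftrightarrow> P3)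
     \<and> (P3 \<longrightarrow> fsigma_oc_property \<mu> TYPE('b::real_vector)
                \<and> fhom_sigma_oc_property \<mu> TYPE('b))"
proof -
  interpret fuzzy_riesz_lattice \<mu>
    by unfold_locales (fact assms(1))
  have P3: "P3 \<longleftrightarrow> closed_ideals_are_sigma \<mu>"
    by (simp add: P3_def closed_ideals_are_sigma_def)
  have "fsigma_oc_property \<mu> TYPE('a) \<Longrightarrow> fhom_sigma_oc_property \<mu> TYPE('a)"
    and "fsigma_oc_property \<mu> TYPE('b) \<Longrightarrow> fhom_sigma_oc_property \<mu> TYPE('b)"
    by (fact fhom_sigma_oc_property_if_fsigma_oc_property)+
  moreover have "fhom_sigma_oc_property \<mu> TYPE('a) \<Longrightarrow> P3"
    unfolding P3 by (fact closed_ideals_are_sigma_if_fhom_sigma_oc_property)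
  moreover have "P3 \<Longrightarrow> fsigma_oc_property \<mu> TYPE('a)" and "P3 \<Longrightarrow> fsigma_oc_property \<mu> TYPE('b)"
    unfolding P3 by (fact fsigma_oc_property_if_closed_ideals_are_sigma)+
  ultimately show ?thesis
    by blast
qed

end
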